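(* Let $\mathcal{P}\subseteq[0,1]^n$ be a polytope. If $\mathcal{F}$ is a strong Bernoulli factory for $\mathcal{P}$ that converges exponentially on $\mathcal{P}$, then $\mathcal{F}$ is differentiable.
   Context: A Bernoulli factory with output set $V$ (for inputs $x\in[0,1]^n$) is a (possibly infinite) rooted binary tree whose internal nodes are labeled by an index $i\in[n]$ or a known constant $c\in(0,1)$ and whose leaves are labeled by elements of $V$; on input $x$ one walks from the root, at a node labeled $i$ flipping a fresh independent coin that is $1$ with probability $x_i$, at a node labeled $c$ a fresh coin of bias $c$, following the edge labeled by the outcome, and outputs the label of the leaf reached; $\mathcal{F}(x)$ is the output and $T_{\mathcal{F}}(x)$ the depth of the leaf reached ($\infty$ if none). For a polytope $\mathcal{P}$ with vertex set $V$, a strong Bernoulli factory for $\mathcal{P}$ is such a factory with output set $V$ that terminates almost surely and satisfies $\mathbb{E}[\mathcal{F}(x)]=x$ for all $x\in\mathcal{P}$. $\mathcal{F}$ converges exponentially on $S$ if there is $c<1$ with $\Pr[T_{\mathcal{F}}(x)>d]\le c^d$ for all positive integers $d$ and all $x\in S$. Define $P_v(x)=\Pr[\mathcal{F}(x)=v]$ and $P_{v,T}(x)=\Pr[\mathcal{F}(x)=v\wedge T_{\mathcal{F}}(x)\le T]$; the latter is the polynomial equal to the sum, over leaves labeled $v$ at depth at most $T$, of the product of the transition probabilities along the root-to-leaf path. Let $\mathcal{H}(\mathcal{P})$ be the affine span of $\mathcal{P}$ and $\mathcal{H}_0(\mathcal{P})=\{y-y':y,y'\in\mathcal{H}(\mathcal{P})\}$.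 $\mathcal{F}$ is differentiable if for each $v\in V$ and each $u\in\mathcal{H}_0(\mathcal{P})$ with $\|u\|=1$, at every $x\in\mathcal{P}$ the directional derivative $\partial_uP_v(x)$ exists and equals $\lim_{T\to\infty}\partial_uP_{v,T}(x)$. *)

theory Defs
  imports "HOL-Analysis.Analysis"
begin

text \<open>Node labels of a Bernoulli factory tree: a leaf carrying an output, an internal
node flipping coin i (of bias x i), or an internal node flipping a coin of known bias c.\<close>
datatype ('n, 'v) bf_label = Leaf 'v | Coin 'n | Const real

text \<open>A (possibly infinite) rooted binary tree is a labelling of all finite paths from the
root (bool lists, True = outcome 1). Only paths all of whose proper prefixes are internal
nodes belong to the tree.\<close>
type_synonym ('n, 'v) bf_tree = "bool list \<Rightarrow> ('n, 'v) bf_label"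

definition is_leaf :: "('n, 'v) bf_label \<Rightarrow> bool" where
  "is_leaf l \<longleftrightarrow> (\<exists>v. l = Leaf v)"

definition bf_node :: "('n, 'v) bf_tree \<Rightarrow> bool list \<Rightarrow> bool" where
  "bf_node t p \<longleftrightarrow> (\<forall>k<length p. \<not> is_leaf (t (take k p)))"

fun edge_prob :: "('n, 'v) bf_label \<Rightarrow> bool \<Rightarrow> real ^ 'n \<Rightarrow> real" where
  "edge_prob (Leaf v) b x = 0"
| "edge_prob (Coin i) b x = (if b then x $ i else 1 - x $ i)"
| "edge_prob (Const c) b x = (if b then c else 1 - c)"

definition path_prob :: "('n, 'v) bf_tree \<Rightarrow> real ^ 'n \<Rightarrow> bool list \<Rightarrow> real" where
  "path_prob t x p = (\<Prod>k<length p. edge_prob (t (take k p)) (p ! k) x)"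

definition bernoulli_factory :: "('n, 'v) bf_tree \<Rightarrow> 'v set \<Rightarrow> bool" where
  "bernoulli_factory t V \<longleftrightarrow>
     (\<forall>p. bf_node t p \<longrightarrow>
        (\<forall>v. t p = Leaf v \<longrightarrow> v \<in> V) \<and> (\<forall>c. t p = Const c \<longrightarrow> 0 < c \<and> c < 1))"

definition P_vT :: "('n, 'v) bf_tree \<Rightarrow> 'v \<Rightarrow> nat \<Rightarrow> real ^ 'n \<Rightarrow> real" where
  "P_vT t v T x = (\<Sum>p\<in>{p. length p \<le> T \<and> bf_node t p \<and> t p = Leaf v}. path_prob t x p)"

definition P_v :: "('n, 'v) bf_tree \<Rightarrow> 'v \<Rightarrow> real ^ 'n \<Rightarrow> real" where
  "P_v t v x = lim (\<lambda>T. P_vT t v T x)"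

definition stop_prob :: "('n, 'v) bf_tree \<Rightarrow> real ^ 'n \<Rightarrow> nat \<Rightarrow> real" where
  "stop_prob t x d = (\<Sum>p\<in>{p. length p \<le> d \<and> bf_node t p \<and> is_leaf (t p)}. path_prob t x p)"

definition vertices :: "(real ^ 'n) set \<Rightarrow> (real ^ 'n) set" where
  "vertices P = {v. v extreme_point_of P}"

definition strong_bernoulli_factory ::
    "('n, real ^ 'n) bf_tree \<Rightarrow> (real ^ 'n) set \<Rightarrow> bool" where
  "strong_bernoulli_factory t P \<longleftrightarrow>
     bernoulli_factory t (vertices P) \<and>
     (\<forall>x\<in>P. (\<lambda>d. stop_prob t x d) \<longlonglongrightarrow> 1) \<and>
     (\<forall>x\<in>P. (\<Sum>v\<in>vertices P. P_v t v x *\<^sub>R v) = x)"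

definition converges_exponentially :: "('n, 'v) bf_tree \<Rightarrow> (real ^ 'n) set \<Rightarrow> bool" where
  "converges_exponentially t S \<longleftrightarrow>
     (\<exists>c<1. \<forall>d>0. \<forall>x\<in>S. 1 - stop_prob t x d \<le> c ^ d)"

definition H0 :: "(real ^ 'n) set \<Rightarrow> (real ^ 'n) set" where
  "H0 P = {y - y' | y y'. y \<in> affine hull P \<and> y' \<in> affine hull P}"

text \<open>Directional derivative of P_v at x in direction u (taken along points of P, where P_v
is a probability) exists and equals lim_T of the directional derivative of the polynomial
P_{v,T}.\<close>
definition differentiable_factory :: "('n, real ^ 'n) bf_tree \<Rightarrow> (real ^ 'n) set \<Rightarrow> bool" where
  "differentiable_factory t P \<longleftrightarrow>
     (\<forall>v\<in>vertices P. \<forall>u\<in>H0 P. norm u = 1 \<longrightarrow> (\<forall>x\<in>P.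
        \<exists>L. (\<lambda>T. deriv (\<lambda>s. P_vT t v T (x + s *\<^sub>R u)) 0) \<longlonglongrightarrow> L \<and>
            ((\<lambda>s. (P_v t v (x + s *\<^sub>R u) - P_v t v x) / s) \<longlongrightarrow> L)
               (at 0 within {s. x + s *\<^sub>R u \<in> P})))"

end

theory Submission
  imports Defs
begin

text \<open>\<open>P_vT t v T\<close> is a polynomial whose directional derivative is a sum over the leaves of
  depth at most \<open>T\<close>. For a leaf at depth \<open>n\<close>, the derivative of its path probability lies
  between \<open>-n\<close> times its probability at the base point and \<open>4 n\<close> times its probability at
  a nearby point of \<open>P\<close>. Leaves at depth \<open>T + 1\<close> carry total probability at most \<open>c ^ T\<close>,
  so along any segment in \<open>P\<close> the derivatives of \<open>P_vT\<close> change by at most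
  \<open>4 (T + 1) c ^ T\<close> from \<open>T\<close> to \<open>T + 1\<close>. These increments are summable, hence the
  derivatives converge uniformly on the segment and their limit is the derivative of \<open>P_v\<close>.
  Linearity in the direction extends the convergence of the derivatives at a point to all
  directions in \<open>H0 P\<close>.\<close>

lemma convergent_if_summable_increments:
  fixes f :: "nat \<Rightarrow> real"
  assumes "\<And>n. \<bar>f (Suc n) - f n\<bar> \<le> M n" and "summable M"
  shows "convergent f"
proof -
  have "summable (\<lambda>n. f (Suc n) - f n)"
    by (rule summable_comparison_test'[OF assms(2)]) (use assms(1) in auto)
  then have "convergent (\<lambda>n. f n - f 0)"
    by (simp add: summable_iff_convergent sum_lessThan_telescope)
  then have "convergent (\<lambda>n. (f n - f 0) + f 0)"
    by (intro convergent_add convergent_const)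
  then show ?thesis by simp
qed

text \<open>Summably bounded increments of the derivatives make them converge uniformly, so
  \<open>has_field_derivative_series\<close> applies to the telescoped sequence.\<close>
lemma has_field_derivative_sequence:
  fixes f f' :: "nat \<Rightarrow> real \<Rightarrow> real"
  assumes "convex S" and "s0 \<in> S" and "convergent (\<lambda>n. f n s0)"
    and deriv: "\<And>n s. s \<in> S \<Longrightarrow> (f n has_field_derivative f' n s) (at s within S)"
    and incr: "\<And>n s. s \<in> S \<Longrightarrow> \<bar>f' (Suc n) s - f' n s\<bar> \<le> M n" and "summable M"
  shows "\<exists>g g'. \<forall>s\<in>S. (\<lambda>n. f n s) \<longlonglongrightarrow> g s \<and> (\<lambda>n. f' n s) \<longlonglongrightarrow> g' s \<and>
           (g has_field_derivative g' s) (at s within S)"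
proof -
  define d where "d n s = f (Suc n) s - f n s" for n s
  define d' where "d' n s = f' (Suc n) s - f' n s" for n s
  have "(d n has_field_derivative d' n s) (at s within S)" if "s \<in> S" for n s
    unfolding d_def d'_def using that by (intro DERIV_diff deriv)
  moreover have "uniform_limit S (\<lambda>n s. \<Sum>i<n. d' i s) (\<lambda>s. \<Sum>i. d' i s) sequentially"
    using incr \<open>summable M\<close> unfolding d'_def by (intro Weierstrass_m_test) auto
  moreover have "summable (\<lambda>n. d n s0)"
    using \<open>convergent (\<lambda>n. f n s0)\<close> unfolding d_def convergent_def
    by (auto intro: telescope_summable)
  ultimately have "\<exists>g. \<forall>s\<in>S. (\<lambda>n. d n s) sums g s \<and>
      (g has_field_derivative (\<Sum>i. d' i s)) (at s within S)"
    by (rule has_field_derivative_series[OF \<open>convex S\<close> _ _ \<open>s0 \<in> S\<close>])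
  then obtain g where g: "\<And>s. s \<in> S \<Longrightarrow>
      (\<lambda>n. d n s) sums g s \<and> (g has_field_derivative (\<Sum>i. d' i s)) (at s within S)"
    by blast
  show ?thesis
  proof (intro exI ballI conjI)
    fix s assume s: "s \<in> S"
    have "(\<lambda>n. (\<Sum>i<n. d i s) + f 0 s) \<longlonglongrightarrow> g s + f 0 s"
      using g[OF s] by (intro tendsto_add) (auto simp: sums_def)
    then show "(\<lambda>n. f n s) \<longlonglongrightarrow> g s + f 0 s"
      by (simp add: d_def sum_lessThan_telescope[of "\<lambda>i. f i s"])
    have "summable (\<lambda>i. d' i s)"
      using incr[OF s] unfolding d'_def by (intro summable_comparison_test'[OF \<open>summable M\<close>]) auto
    then have "(\<lambda>n. (\<Sum>i<n. d' i s) + f' 0 s) \<longlonglongrightarrow> (\<Sum>i. d' i s) + f' 0 s"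
      by (intro tendsto_add summable_LIMSEQ) auto
    then show "(\<lambda>n. f' n s) \<longlonglongrightarrow> (\<Sum>i. d' i s) + f' 0 s"
      by (simp add: d'_def sum_lessThan_telescope[of "\<lambda>i. f' i s"])
    show "((\<lambda>s. g s + f 0 s) has_field_derivative (\<Sum>i. d' i s) + f' 0 s) (at s within S)"
      using g[OF s] deriv[OF s] by (intro DERIV_add) auto
  qed
qed

lemma convex_line_section:
  fixes P :: "'a::real_vector set"
  assumes "convex P"
  shows "convex {s::real. x + s *\<^sub>R u \<in> P}"
proof -
  have "{s::real. x + s *\<^sub>R u \<in> P} = (\<lambda>s. s *\<^sub>R u) -` ((\<lambda>y. - x + y) ` P)"
    by (force simp: algebra_simps)
  then show ?thesis
    using assms by (simp add: convex_linear_vimage linear_scaleR_left convex_translation)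
qed

lemma sum_prod_except_insert:
  fixes a b :: "'i \<Rightarrow> real"
  assumes "finite K" "i \<notin> K"
  shows "(\<Sum>k\<in>insert i K. b k * (\<Prod>j\<in>insert i K - {k}. a j))
       = b i * (\<Prod>j\<in>K. a j) + a i * (\<Sum>k\<in>K. b k * (\<Prod>j\<in>K - {k}. a j))"
proof -
  have "(\<Sum>k\<in>K. b k * (\<Prod>j\<in>insert i K - {k}. a j))
      = (\<Sum>k\<in>K. a i * (b k * (\<Prod>j\<in>K - {k}. a j)))"
  proof (rule sum.cong)
    fix k assume "k \<in> K"
    then have "insert i K - {k} = insert i (K - {k})" using assms by auto
    then show "b k * (\<Prod>j\<in>insert i K - {k}. a j) = a i * (b k * (\<Prod>j\<in>K - {k}. a j))"
      using assms by simp
  qed simp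
  moreover have "insert i K - {i} = K" using assms by auto
  ultimately show ?thesis using assms by (simp add: sum_distrib_left)
qed

text \<open>The sum \<open>\<Sum>k\<in>K. b k * (\<Prod>j\<in>K - {k}. a j)\<close> is the derivative of
  \<open>\<lambda>s. \<Prod>k\<in>K. a k + b k * s\<close> at \<open>0\<close>.\<close>
lemma prod_ge_first_order:
  fixes a b :: "'i \<Rightarrow> real"
  assumes "finite K" and "\<And>k. k \<in> K \<Longrightarrow> 0 \<le> a k" and "\<And>k. k \<in> K \<Longrightarrow> 0 \<le> b k" and "0 \<le> s"
  shows "(\<Prod>k\<in>K. a k) + s * (\<Sum>k\<in>K. b k * (\<Prod>j\<in>K - {k}. a j)) \<le> (\<Prod>k\<in>K. a k + b k * s)"
  using assms
proof (induction K rule: finite_induct)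
  case (insert i K)
  let ?A = "\<Prod>k\<in>K. a k" and ?B = "\<Prod>k\<in>K. a k + b k * s"
  have "?A \<le> ?B" using insert.prems by (intro prod_mono) auto
  have "(\<Prod>k\<in>insert i K. a k) + s * (\<Sum>k\<in>insert i K. b k * (\<Prod>j\<in>insert i K - {k}. a j))
      = a i * (?A + s * (\<Sum>k\<in>K. b k * (\<Prod>j\<in>K - {k}. a j))) + b i * s * ?A"
    unfolding sum_prod_except_insert[OF insert.hyps] prod.insert[OF insert.hyps]
    by (simp add: algebra_simps)
  also have "\<dots> \<le> a i * ?B + b i * s * ?B"
    using insert \<open>?A \<le> ?B\<close> by (intro add_mono mult_left_mono) auto
  also have "\<dots> = (\<Prod>k\<in>insert i K. a k + b k * s)"
    using insert.hyps by (simp add: algebra_simps)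
  finally show ?case .
qed simp

lemma sum_prod_except_ge:
  fixes a b :: "'i \<Rightarrow> real"
  assumes "\<And>k. k \<in> K \<Longrightarrow> 0 \<le> a k" and "\<And>k. k \<in> K \<Longrightarrow> 0 \<le> a k + b k"
  shows "- (real (card K) * (\<Prod>k\<in>K. a k)) \<le> (\<Sum>k\<in>K. b k * (\<Prod>j\<in>K - {k}. a j))"
proof (cases "finite K")
  case True
  have "- (\<Prod>k\<in>K. a k) \<le> b k * (\<Prod>j\<in>K - {k}. a j)" if k: "k \<in> K" for k
  proof -
    have "(\<Prod>k\<in>K. a k) = a k * (\<Prod>j\<in>K - {k}. a j)"
      using True k by (simp add: prod.remove)
    moreover have "- a k \<le> b k" using assms(2)[OF k] by simp
    then have "- a k * (\<Prod>j\<in>K - {k}. a j) \<le> b k * (\<Prod>j\<in>K - {k}. a j)"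
      using assms(1) by (intro mult_right_mono prod_nonneg) auto
    ultimately show ?thesis by simp
  qed
  then have "(\<Sum>k\<in>K. - (\<Prod>k\<in>K. a k)) \<le> (\<Sum>k\<in>K. b k * (\<Prod>j\<in>K - {k}. a j))"
    by (rule sum_mono)
  then show ?thesis by simp
qed simp

lemma prod_pos_part_le:
  fixes a b :: "'i \<Rightarrow> real"
  assumes "\<And>k. k \<in> K \<Longrightarrow> 0 \<le> a k" and "\<And>k. k \<in> K \<Longrightarrow> 0 \<le> a k + b k"
    and "0 \<le> s" "s \<le> 1"
  shows "(1 - s) ^ card K * (\<Prod>k\<in>K. a k + max (b k) 0 * s) \<le> (\<Prod>k\<in>K. a k + b k * s)"
proof (cases "finite K")
  case True
  have "(1 - s) * (a k + max (b k) 0 * s) \<le> a k + b k * s" if k: "k \<in> K" for k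
  proof (cases "0 \<le> b k")
    case True
    then show ?thesis using assms(1)[OF k] \<open>0 \<le> s\<close> by (simp add: algebra_simps)
  next
    case False
    have "- a k * s \<le> b k * s" using assms(2)[OF k] \<open>0 \<le> s\<close> by (intro mult_right_mono) auto
    then show ?thesis using False by (simp add: algebra_simps)
  qed
  then have "(\<Prod>k\<in>K. (1 - s) * (a k + max (b k) 0 * s)) \<le> (\<Prod>k\<in>K. a k + b k * s)"
    using assms by (intro prod_mono) auto
  then show ?thesis using True by (simp add: prod.distrib)
qed simp

text \<open>Upper bound by the product at the shifted point \<open>s = 1 / (2 * card K)\<close>, chosen so that
  Bernoulli's inequality gives \<open>(1 - s) ^ card K \<ge> 1 / 2\<close>.\<close>
lemma sum_prod_except_le:
  fixes a b :: "'i \<Rightarrow> real"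
  assumes "finite K" "K \<noteq> {}"
    and a: "\<And>k. k \<in> K \<Longrightarrow> 0 \<le> a k" and ab: "\<And>k. k \<in> K \<Longrightarrow> 0 \<le> a k + b k"
  shows "(\<Sum>k\<in>K. b k * (\<Prod>j\<in>K - {k}. a j))
       \<le> 4 * real (card K) * (\<Prod>k\<in>K. a k + b k * (1 / (2 * real (card K))))"
proof -
  define n where "n = card K"
  define s where "s = 1 / (2 * real n)"
  have "n > 0" using assms by (simp add: n_def card_gt_0_iff)
  then have s: "0 < s" "s \<le> 1" "real n * s = 1 / 2" by (auto simp: s_def field_simps)
  let ?Q = "\<Prod>k\<in>K. a k + max (b k) 0 * s"
  have Q: "0 \<le> ?Q" using a s by (intro prod_nonneg add_nonneg_nonneg mult_nonneg_nonneg) auto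
  have "(\<Sum>k\<in>K. b k * (\<Prod>j\<in>K - {k}. a j)) \<le> (\<Sum>k\<in>K. max (b k) 0 * (\<Prod>j\<in>K - {k}. a j))"
    using a by (intro sum_mono mult_right_mono prod_nonneg) auto
  also have "\<dots> \<le> ?Q / s"
  proof -
    have "(\<Prod>k\<in>K. a k) + s * (\<Sum>k\<in>K. max (b k) 0 * (\<Prod>j\<in>K - {k}. a j)) \<le> ?Q"
      using assms(1) a s(1) by (intro prod_ge_first_order) auto
    moreover have "0 \<le> (\<Prod>k\<in>K. a k)" using a by (intro prod_nonneg) auto
    ultimately show ?thesis using s(1) by (simp add: field_simps)
  qed
  also have "\<dots> \<le> 2 * (\<Prod>k\<in>K. a k + b k * s) / s"
  proof (rule divide_right_mono)
    have "1 / 2 \<le> (1 - s) ^ n"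
      using Bernoulli_inequality[of "- s" n] s by simp
    then have "1 / 2 * ?Q \<le> (1 - s) ^ n * ?Q"
      using Q by (rule mult_right_mono)
    also have "\<dots> \<le> (\<Prod>k\<in>K. a k + b k * s)"
      unfolding n_def using a ab s(1,2) by (intro prod_pos_part_le) auto
    finally show "?Q \<le> 2 * (\<Prod>k\<in>K. a k + b k * s)" by simp
  qed (use s in simp)
  also have "\<dots> = 4 * real n * (\<Prod>k\<in>K. a k + b k * s)"
    using \<open>n > 0\<close> by (simp add: s_def field_simps)
  finally show ?thesis by (simp add: n_def s_def)
qed

definition unit_cube :: "(real ^ 'n) set" where
  "unit_cube = {x. \<forall>i. 0 \<le> x $ i \<and> x $ i \<le> 1}"

definition edge_slope :: "('n, 'v) bf_label \<Rightarrow> bool \<Rightarrow> real ^ 'n \<Rightarrow> real" where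
  "edge_slope l b w = (case l of Coin i \<Rightarrow> if b then w $ i else - w $ i | _ \<Rightarrow> 0)"

lemma edge_prob_add_scaleR:
  "edge_prob l b (y + s *\<^sub>R w) = edge_prob l b y + s * edge_slope l b w"
  by (cases l) (auto simp: edge_slope_def algebra_simps)

lemma linear_edge_slope: "linear (edge_slope l b)"
  by unfold_locales (cases l; simp add: edge_slope_def algebra_simps)+

lemma bf_node_take: "bf_node t p \<Longrightarrow> bf_node t (take k p)"
  by (auto simp: bf_node_def min_def)

lemma edge_prob_nonneg:
  assumes "bernoulli_factory t V" and "bf_node t q" and "y \<in> unit_cube"
  shows "0 \<le> edge_prob (t q) b y"
proof (cases "t q")
  case (Const c)
  then have "0 < c \<and> c < 1" using assms(1,2) unfolding bernoulli_factory_def by blast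
  then show ?thesis using Const by auto
qed (use assms(3) in \<open>auto simp: unit_cube_def\<close>)

lemma path_prob_nonneg:
  assumes "bernoulli_factory t V" and "bf_node t p" and "y \<in> unit_cube"
  shows "0 \<le> path_prob t y p"
  unfolding path_prob_def
  using edge_prob_nonneg[OF assms(1) bf_node_take[OF assms(2)] assms(3)] by (intro prod_nonneg) auto

definition path_prob_deriv :: "('n, 'v) bf_tree \<Rightarrow> bool list \<Rightarrow> real ^ 'n \<Rightarrow> real ^ 'n \<Rightarrow> real" where
  "path_prob_deriv t p y w = (\<Sum>k<length p. edge_slope (t (take k p)) (p ! k) w *
     (\<Prod>j\<in>{..<length p} - {k}. edge_prob (t (take j p)) (p ! j) y))"

lemma path_prob_has_derivative:
  "((\<lambda>s. path_prob t (y + s *\<^sub>R w) p) has_real_derivative path_prob_deriv t p (y + s0 *\<^sub>R w) w) (at s0)"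
proof -
  have "((\<lambda>s. \<Prod>k<length p. edge_prob (t (take k p)) (p ! k) y + s * edge_slope (t (take k p)) (p ! k) w)
     has_real_derivative (\<Sum>k<length p. edge_slope (t (take k p)) (p ! k) w *
       (\<Prod>j\<in>{..<length p} - {k}. edge_prob (t (take j p)) (p ! j) y + s0 * edge_slope (t (take j p)) (p ! j) w)))
     (at s0)"
    by (rule has_field_derivative_prod) (auto intro!: derivative_eq_intros)
  then show ?thesis
    by (simp add: path_prob_def path_prob_deriv_def edge_prob_add_scaleR)
qed

lemma linear_path_prob_deriv: "linear (path_prob_deriv t p y)"
proof -
  have "linear (\<lambda>w. edge_slope l b w * r)" for l b r
    using linear_compose[OF linear_edge_slope bounded_linear.linear[OF bounded_linear_mult_left]]
    by (simp add: o_def)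
  then show ?thesis unfolding path_prob_deriv_def by (intro linear_compose_sum) auto
qed

text \<open>The upper bound has to be taken at a point strictly between \<open>y\<close> and \<open>y + w\<close>: an
  edge probability may vanish at \<open>y\<close> while its slope is positive.\<close>
lemma path_prob_deriv_bounds:
  assumes "bernoulli_factory t V" and "bf_node t p" and "p \<noteq> []"
    and "y \<in> unit_cube" and "y + w \<in> unit_cube"
  shows "- (real (length p) * path_prob t y p) \<le> path_prob_deriv t p y w \<and>
    path_prob_deriv t p y w \<le> 4 * real (length p) * path_prob t (y + (1 / (2 * real (length p))) *\<^sub>R w) p"
proof -
  define a where "a k = edge_prob (t (take k p)) (p ! k) y" for k
  define b where "b k = edge_slope (t (take k p)) (p ! k) w" for k
  have node: "bf_node t (take k p)" for k using assms(2) by (rule bf_node_take)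
  have a: "0 \<le> a k" for k
    unfolding a_def using edge_prob_nonneg[OF assms(1) node assms(4)] .
  have ab: "0 \<le> a k + b k" for k
  proof -
    have "0 \<le> edge_prob (t (take k p)) (p ! k) (y + 1 *\<^sub>R w)"
      using edge_prob_nonneg[OF assms(1) node] assms(5) by simp
    then show ?thesis by (simp only: edge_prob_add_scaleR a_def b_def)
  qed
  have "path_prob_deriv t p y w = (\<Sum>k\<in>{..<length p}. b k * (\<Prod>j\<in>{..<length p} - {k}. a j))"
    and "path_prob t y p = (\<Prod>k\<in>{..<length p}. a k)"
    and "path_prob t (y + (1 / (2 * real (length p))) *\<^sub>R w) p
       = (\<Prod>k\<in>{..<length p}. a k + b k * (1 / (2 * real (length p))))"
    by (simp_all add: path_prob_deriv_def path_prob_def a_def b_def edge_prob_add_scaleR mult.commute)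
  then show ?thesis
    using sum_prod_except_ge[of "{..<length p}" a b] sum_prod_except_le[of "{..<length p}" a b] a ab assms(3)
    by (simp add: lessThan_empty_iff)
qed

definition leaves_upto :: "('n, 'v) bf_tree \<Rightarrow> 'v \<Rightarrow> nat \<Rightarrow> bool list set" where
  "leaves_upto t v T = {p. length p \<le> T \<and> bf_node t p \<and> t p = Leaf v}"

definition leaves_at :: "('n, 'v) bf_tree \<Rightarrow> 'v \<Rightarrow> nat \<Rightarrow> bool list set" where
  "leaves_at t v n = {p. length p = n \<and> bf_node t p \<and> t p = Leaf v}"

lemma finite_leaves_upto: "finite (leaves_upto t v T)"
  by (rule finite_subset[OF _ finite_lists_length_le[of UNIV T]]) (auto simp: leaves_upto_def)

lemma finite_leaves_at: "finite (leaves_at t v n)"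
  by (rule finite_subset[OF _ finite_lists_length_le[of UNIV n]]) (auto simp: leaves_at_def)

lemma sum_leaves_upto_Suc:
  "(\<Sum>p\<in>leaves_upto t v (Suc T). f p) = (\<Sum>p\<in>leaves_upto t v T. f p) + (\<Sum>p\<in>leaves_at t v (Suc T). f p)"
proof -
  have "leaves_upto t v (Suc T) = leaves_upto t v T \<union> leaves_at t v (Suc T)"
    and "leaves_upto t v T \<inter> leaves_at t v (Suc T) = {}"
    by (auto simp: leaves_upto_def leaves_at_def)
  then show ?thesis by (simp add: sum.union_disjoint finite_leaves_upto finite_leaves_at)
qed

lemma P_vT_eq_sum_leaves_upto: "P_vT t v T y = (\<Sum>p\<in>leaves_upto t v T. path_prob t y p)"
  by (simp add: P_vT_def leaves_upto_def)

definition P_vT_deriv :: "('n, 'v) bf_tree \<Rightarrow> 'v \<Rightarrow> nat \<Rightarrow> real ^ 'n \<Rightarrow> real ^ 'n \<Rightarrow> real" where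
  "P_vT_deriv t v T y w = (\<Sum>p\<in>leaves_upto t v T. path_prob_deriv t p y w)"

lemma P_vT_has_derivative:
  "((\<lambda>s. P_vT t v T (y + s *\<^sub>R w)) has_real_derivative P_vT_deriv t v T (y + s0 *\<^sub>R w) w) (at s0)"
  unfolding P_vT_eq_sum_leaves_upto P_vT_deriv_def by (intro DERIV_sum path_prob_has_derivative)

lemma linear_P_vT_deriv: "linear (P_vT_deriv t v T y)"
  unfolding P_vT_deriv_def by (intro linear_compose_sum ballI linear_path_prob_deriv)

lemma stop_prob_Suc:
  "stop_prob t y (Suc d) = stop_prob t y d +
     (\<Sum>p\<in>{p. length p = Suc d \<and> bf_node t p \<and> is_leaf (t p)}. path_prob t y p)"
proof -
  let ?S = "\<lambda>n. {p::bool list. length p \<le> n \<and> bf_node t p \<and> is_leaf (t p)}"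
  let ?C = "{p. length p = Suc d \<and> bf_node t p \<and> is_leaf (t p)}"
  have "?S (Suc d) = ?S d \<union> ?C" and disjoint: "?S d \<inter> ?C = {}" by auto
  moreover have "finite (?S n)" for n
    by (rule finite_subset[OF _ finite_lists_length_le[of UNIV n]]) auto
  moreover have "finite ?C"
    by (rule finite_subset[OF _ finite_lists_length_le[of UNIV "Suc d"]]) auto
  ultimately show ?thesis
    unfolding stop_prob_def by (simp add: sum.union_disjoint[OF _ _ disjoint])
qed

lemma stop_prob_nonneg:
  assumes "bernoulli_factory t V" and "y \<in> unit_cube"
  shows "0 \<le> stop_prob t y d"
  unfolding stop_prob_def using path_prob_nonneg[OF assms(1) _ assms(2)] by (intro sum_nonneg) auto

lemma stop_prob_le_1:
  assumes "bernoulli_factory t V" and "y \<in> unit_cube" and "(\<lambda>d. stop_prob t y d) \<longlonglongrightarrow> 1"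
  shows "stop_prob t y d \<le> 1"
proof -
  have "incseq (\<lambda>d. stop_prob t y d)"
    unfolding incseq_Suc_iff stop_prob_Suc
    using path_prob_nonneg[OF assms(1) _ assms(2)] by (auto intro!: sum_nonneg)
  then show ?thesis using assms(3) by (rule incseq_le)
qed

lemma sum_leaves_at_le_tail:
  assumes "bernoulli_factory t V" and "y \<in> unit_cube" and "(\<lambda>d. stop_prob t y d) \<longlonglongrightarrow> 1"
  shows "(\<Sum>p\<in>leaves_at t v (Suc T). path_prob t y p) \<le> 1 - stop_prob t y T"
proof -
  let ?C = "{p. length p = Suc T \<and> bf_node t p \<and> is_leaf (t p)}"
  have "(\<Sum>p\<in>leaves_at t v (Suc T). path_prob t y p) \<le> (\<Sum>p\<in>?C. path_prob t y p)"
  proof (rule sum_mono2)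
    show "finite ?C"
      by (rule finite_subset[OF _ finite_lists_length_le[of UNIV "Suc T"]]) auto
  qed (use path_prob_nonneg[OF assms(1) _ assms(2)] in \<open>auto simp: leaves_at_def is_leaf_def\<close>)
  also have "\<dots> = stop_prob t y (Suc T) - stop_prob t y T" by (simp add: stop_prob_Suc)
  also have "\<dots> \<le> 1 - stop_prob t y T" using stop_prob_le_1[OF assms] by simp
  finally show ?thesis .
qed

lemma sum_leaves_at_nonneg:
  assumes "bernoulli_factory t V" and "y \<in> unit_cube"
  shows "0 \<le> (\<Sum>p\<in>leaves_at t v n. path_prob t y p)"
  using path_prob_nonneg[OF assms(1) _ assms(2)] by (intro sum_nonneg) (auto simp: leaves_at_def)

lemma H0_subset_span:
  assumes "x \<in> P"
  shows "H0 P \<subseteq> span ((\<lambda>y. - x + y) ` P)"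
proof
  fix u assume "u \<in> H0 P"
  then obtain y y' where "u = y - y'" "y \<in> affine hull P" "y' \<in> affine hull P"
    by (auto simp: H0_def)
  moreover have "affine hull P = (\<lambda>z. x + z) ` span ((\<lambda>y. - x + y) ` P)"
    using assms by (intro affine_hull_span_gen hull_inc)
  ultimately show "u \<in> span ((\<lambda>y. - x + y) ` P)"
    by (auto intro: span_diff)
qed

locale exp_converging_factory =
  fixes t :: "('n::finite, 'v) bf_tree" and V :: "'v set" and P :: "(real ^ 'n) set" and c :: real
  assumes factory: "bernoulli_factory t V"
    and convex_P: "convex P"
    and P_subset_cube: "P \<subseteq> unit_cube"
    and terminates: "\<And>x. x \<in> P \<Longrightarrow> (\<lambda>d. stop_prob t x d) \<longlonglongrightarrow> 1"
    and tail_le: "\<And>d x. 0 < d \<Longrightarrow> x \<in> P \<Longrightarrow> 1 - stop_prob t x d \<le> c ^ d"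
    and base_less_1: "c < 1"
begin

lemma base_nonneg:
  assumes "x \<in> P"
  shows "0 \<le> c"
  using tail_le[of 1 x] stop_prob_le_1[OF factory _ terminates, of x 1] assms P_subset_cube by auto

lemma summable_increment_bound:
  assumes "x \<in> P"
  shows "summable (\<lambda>T. 4 * real (Suc T) * c ^ T)"
proof -
  have "summable (\<lambda>T. real (Suc T) * c ^ T)"
    using geometric_deriv_sums[of c] base_nonneg[OF assms] base_less_1 by (auto simp: sums_iff)
  then have "summable (\<lambda>T. 4 * (real (Suc T) * c ^ T))" by (rule summable_mult)
  then show ?thesis by (simp only: mult.assoc)
qed

lemma sum_leaves_at_le_pow:
  assumes "y \<in> P"
  shows "(\<Sum>p\<in>leaves_at t v (Suc T). path_prob t y p) \<le> c ^ T"
proof -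
  have y: "y \<in> unit_cube" using assms P_subset_cube by auto
  have "1 - stop_prob t y T \<le> c ^ T"
    using tail_le[OF _ assms, of T] stop_prob_nonneg[OF factory y, of 0] by (cases T) auto
  then show ?thesis using sum_leaves_at_le_tail[OF factory y terminates[OF assms], of v T] by linarith
qed

lemma convergent_P_vT:
  assumes "x \<in> P"
  shows "convergent (\<lambda>T. P_vT t v T x)"
proof (rule convergent_if_summable_increments)
  have x: "x \<in> unit_cube" using assms P_subset_cube by auto
  show "\<bar>P_vT t v (Suc T) x - P_vT t v T x\<bar> \<le> c ^ T" for T
    using sum_leaves_at_le_pow[OF assms] sum_leaves_at_nonneg[OF factory x]
    by (simp add: P_vT_eq_sum_leaves_upto sum_leaves_upto_Suc)
  show "summable (\<lambda>T. c ^ T)"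
    using base_nonneg[OF assms] base_less_1 by (intro summable_geometric) auto
qed

text \<open>Both sides of \<open>path_prob_deriv_bounds\<close> are path probabilities at points of \<open>P\<close>, and
  the leaves of depth \<open>T + 1\<close> carry total probability at most \<open>c ^ T\<close> there.\<close>
lemma P_vT_deriv_increment_le:
  assumes y: "y \<in> P" and yw: "y + w \<in> P"
  shows "\<bar>P_vT_deriv t v (Suc T) y w - P_vT_deriv t v T y w\<bar> \<le> 4 * real (Suc T) * c ^ T"
proof -
  define n where "n = Suc T"
  define z where "z = y + (1 / (2 * real n)) *\<^sub>R w"
  have "z \<in> P"
  proof -
    have "(1 - 1 / (2 * real n)) *\<^sub>R y + (1 / (2 * real n)) *\<^sub>R (y + w) \<in> P"
      using convex_P y yw by (intro convexD) (auto simp: n_def)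
    then show ?thesis by (simp add: z_def algebra_simps)
  qed
  have cube: "y \<in> unit_cube" "y + w \<in> unit_cube" "z \<in> unit_cube"
    using y yw \<open>z \<in> P\<close> P_subset_cube by auto
  let ?D = "\<Sum>p\<in>leaves_at t v n. path_prob_deriv t p y w"
  have bounds: "- (real n * path_prob t y p) \<le> path_prob_deriv t p y w \<and>
      path_prob_deriv t p y w \<le> 4 * real n * path_prob t z p" if "p \<in> leaves_at t v n" for p
  proof -
    have "length p = n" "bf_node t p" "p \<noteq> []" using that by (auto simp: leaves_at_def n_def)
    then show ?thesis using path_prob_deriv_bounds[OF factory _ _ cube(1,2), of p] by (simp add: z_def)
  qed
  let ?Py = "\<Sum>p\<in>leaves_at t v n. path_prob t y p" and ?Pz = "\<Sum>p\<in>leaves_at t v n. path_prob t z p"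
  have "(\<Sum>p\<in>leaves_at t v n. - (real n * path_prob t y p)) \<le> ?D"
    using bounds by (intro sum_mono) auto
  then have lower: "- (real n * ?Py) \<le> ?D" by (simp add: sum_negf sum_distrib_left)
  have "?D \<le> (\<Sum>p\<in>leaves_at t v n. 4 * real n * path_prob t z p)"
    using bounds by (intro sum_mono) auto
  then have upper: "?D \<le> 4 * real n * ?Pz" by (simp add: sum_distrib_left)
  have "?Py \<le> c ^ T" "?Pz \<le> c ^ T" "0 \<le> ?Py"
    using sum_leaves_at_le_pow y \<open>z \<in> P\<close> sum_leaves_at_nonneg[OF factory cube(1)]
    by (auto simp: n_def)
  then have "real n * ?Py \<le> real n * c ^ T" "4 * real n * ?Pz \<le> 4 * real n * c ^ T" "0 \<le> real n * c ^ T"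
    by (auto intro: mult_left_mono)
  then have "\<bar>?D\<bar> \<le> 4 * real n * c ^ T" using lower upper by linarith
  then show ?thesis by (simp add: P_vT_deriv_def sum_leaves_upto_Suc n_def)
qed

lemma convergent_P_vT_deriv:
  assumes x: "x \<in> P" and u: "u \<in> H0 P"
  shows "convergent (\<lambda>T. P_vT_deriv t v T x u)"
proof -
  let ?W = "{w. convergent (\<lambda>T. P_vT_deriv t v T x w)}"
  have "subspace ?W"
    unfolding subspace_def
  proof (intro conjI ballI allI)
    show "0 \<in> ?W" by (simp add: linear_0[OF linear_P_vT_deriv] convergent_const)
    show "w + w' \<in> ?W" if "w \<in> ?W" "w' \<in> ?W" for w w'
      using that by (simp add: linear_add[OF linear_P_vT_deriv] convergent_add)
    show "r *\<^sub>R w \<in> ?W" if "w \<in> ?W" for r w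
      using that by (simp add: linear_cmul[OF linear_P_vT_deriv] convergent_mult[OF convergent_const])
  qed
  moreover have "(\<lambda>y. - x + y) ` P \<subseteq> ?W"
  proof
    fix w assume "w \<in> (\<lambda>y. - x + y) ` P"
    then have "x + w \<in> P" by auto
    then show "w \<in> ?W"
      using P_vT_deriv_increment_le[OF x, of w v]
      by (simp add: convergent_if_summable_increments[OF _ summable_increment_bound[OF x]])
  qed
  ultimately have "span ((\<lambda>y. - x + y) ` P) \<subseteq> ?W" by (rule span_minimal[rotated])
  then show ?thesis using H0_subset_span[OF x] u by auto
qed

text \<open>From every point of the segment \<open>x + s *\<^sub>R u\<close> one of its endpoints \<open>s = 0\<close>,
  \<open>s = s0\<close> lies at distance at least \<open>\<bar>s0\<bar> / 2\<close>; linearity in the direction then turns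
  \<open>P_vT_deriv_increment_le\<close> into a bound in direction \<open>u\<close>.\<close>
lemma P_vT_deriv_increment_le_on_line:
  assumes "x \<in> P" and "x + s0 *\<^sub>R u \<in> P" and "s0 \<noteq> 0" and "x + s *\<^sub>R u \<in> P"
  shows "\<bar>P_vT_deriv t v (Suc T) (x + s *\<^sub>R u) u - P_vT_deriv t v T (x + s *\<^sub>R u) u\<bar>
    \<le> 2 * (4 * real (Suc T) * c ^ T) / \<bar>s0\<bar>"
proof -
  define y where "y = x + s *\<^sub>R u"
  define d where "d = P_vT_deriv t v (Suc T) y u - P_vT_deriv t v T y u"
  have bound: "\<bar>r\<bar> * \<bar>d\<bar> \<le> 4 * real (Suc T) * c ^ T" if "y + r *\<^sub>R u \<in> P" for r
  proof -
    have "P_vT_deriv t v (Suc T) y (r *\<^sub>R u) - P_vT_deriv t v T y (r *\<^sub>R u) = r * d"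
      by (simp add: d_def linear_cmul[OF linear_P_vT_deriv] algebra_simps)
    then show ?thesis
      using P_vT_deriv_increment_le[of y "r *\<^sub>R u" v T] assms(4) that
      by (simp add: y_def abs_mult)
  qed
  have "\<bar>s0\<bar> / 2 * \<bar>d\<bar> \<le> 4 * real (Suc T) * c ^ T"
  proof (cases "\<bar>s0\<bar> / 2 \<le> \<bar>s0 - s\<bar>")
    case True
    have "y + (s0 - s) *\<^sub>R u = x + s0 *\<^sub>R u" by (simp add: y_def algebra_simps)
    then have "\<bar>s0 - s\<bar> * \<bar>d\<bar> \<le> 4 * real (Suc T) * c ^ T" using bound assms(2) by simp
    moreover have "\<bar>s0\<bar> / 2 * \<bar>d\<bar> \<le> \<bar>s0 - s\<bar> * \<bar>d\<bar>" using True by (intro mult_right_mono) auto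
    ultimately show ?thesis by linarith
  next
    case False
    then have "\<bar>s0\<bar> / 2 \<le> \<bar>- s\<bar>" by linarith
    then have "\<bar>s0\<bar> / 2 * \<bar>d\<bar> \<le> \<bar>- s\<bar> * \<bar>d\<bar>" by (intro mult_right_mono) auto
    moreover have "y + (- s) *\<^sub>R u = x" by (simp add: y_def)
    then have "\<bar>- s\<bar> * \<bar>d\<bar> \<le> 4 * real (Suc T) * c ^ T" using bound[of "- s"] assms(1) by simp
    ultimately show ?thesis by linarith
  qed
  then show ?thesis using assms(3) by (simp add: d_def y_def field_simps)
qed

lemma P_v_has_derivative_on_line:
  assumes x: "x \<in> P" and s0: "x + s0 *\<^sub>R u \<in> P" "s0 \<noteq> 0"
  shows "\<exists>L. (\<lambda>T. P_vT_deriv t v T x u) \<longlonglongrightarrow> L \<and>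
    ((\<lambda>s. P_v t v (x + s *\<^sub>R u)) has_field_derivative L) (at 0 within {s. x + s *\<^sub>R u \<in> P})"
proof -
  define I where "I = {s. x + s *\<^sub>R u \<in> P}"
  have "0 \<in> I" using x by (simp add: I_def)
  have "convergent (\<lambda>T. P_vT t v T (x + 0 *\<^sub>R u))"
    using convergent_P_vT[OF x] by simp
  moreover have "((\<lambda>s. P_vT t v T (x + s *\<^sub>R u)) has_field_derivative P_vT_deriv t v T (x + s *\<^sub>R u) u)
      (at s within I)" for T s
    by (rule has_field_derivative_at_within[OF P_vT_has_derivative])
  moreover have "\<bar>P_vT_deriv t v (Suc T) (x + s *\<^sub>R u) u - P_vT_deriv t v T (x + s *\<^sub>R u) u\<bar>
      \<le> 2 * (4 * real (Suc T) * c ^ T) / \<bar>s0\<bar>" if "s \<in> I" for T s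
    using P_vT_deriv_increment_le_on_line[OF x s0] that by (simp add: I_def)
  moreover have "summable (\<lambda>T. 2 * (4 * real (Suc T) * c ^ T) / \<bar>s0\<bar>)"
    using summable_increment_bound[OF x] by (intro summable_divide summable_mult)
  ultimately have "\<exists>g g'. \<forall>s\<in>I. (\<lambda>T. P_vT t v T (x + s *\<^sub>R u)) \<longlonglongrightarrow> g s \<and>
      (\<lambda>T. P_vT_deriv t v T (x + s *\<^sub>R u) u) \<longlonglongrightarrow> g' s \<and> (g has_field_derivative g' s) (at s within I)"
    by (intro has_field_derivative_sequence[OF convex_line_section[OF convex_P, of x u, folded I_def]
        \<open>0 \<in> I\<close>])
  then obtain g g' where g: "\<And>s. s \<in> I \<Longrightarrow>
      (\<lambda>T. P_vT t v T (x + s *\<^sub>R u)) \<longlonglongrightarrow> g s \<and>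
      (\<lambda>T. P_vT_deriv t v T (x + s *\<^sub>R u) u) \<longlonglongrightarrow> g' s \<and>
      (g has_field_derivative g' s) (at s within I)"
    by blast
  have "g s = P_v t v (x + s *\<^sub>R u)" if "s \<in> I" for s
    using limI[OF conjunct1[OF g[OF that]]] by (simp add: P_v_def)
  moreover have "(g has_field_derivative g' 0) (at 0 within I)" using g[OF \<open>0 \<in> I\<close>] by simp
  ultimately have "((\<lambda>s. P_v t v (x + s *\<^sub>R u)) has_field_derivative g' 0) (at 0 within I)"
    using has_field_derivative_transform_within[OF _ zero_less_one \<open>0 \<in> I\<close>] by simp
  then show ?thesis using g[OF \<open>0 \<in> I\<close>] by (auto simp: I_def)
qed

lemma P_v_difference_quotient_tendsto:
  assumes x: "x \<in> P" and L: "(\<lambda>T. P_vT_deriv t v T x u) \<longlonglongrightarrow> L"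
  shows "((\<lambda>s. (P_v t v (x + s *\<^sub>R u) - P_v t v x) / s) \<longlongrightarrow> L) (at 0 within {s. x + s *\<^sub>R u \<in> P})"
proof (cases "\<exists>s0. s0 \<noteq> 0 \<and> x + s0 *\<^sub>R u \<in> P")
  case False
  then have "{s. x + s *\<^sub>R u \<in> P} \<subseteq> {0}" by auto
  then have "\<not> 0 islimpt {s. x + s *\<^sub>R u \<in> P}"
    using islimpt_subset islimpt_finite by blast
  then have "at 0 within {s. x + s *\<^sub>R u \<in> P} = bot"
    using trivial_limit_within by blast
  then show ?thesis by simp
next
  case True
  then obtain L' where "(\<lambda>T. P_vT_deriv t v T x u) \<longlonglongrightarrow> L'" and
    "((\<lambda>s. P_v t v (x + s *\<^sub>R u)) has_field_derivative L') (at 0 within {s. x + s *\<^sub>R u \<in> P})"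
    using x P_v_has_derivative_on_line by blast
  moreover have "L' = L" using calculation(1) L by (rule LIMSEQ_unique)
  ultimately show ?thesis by (simp add: has_field_derivative_iff)
qed

end

theorem theorem7p10:
  fixes P :: "(real ^ 'n) set" and t :: "('n, real ^ 'n) bf_tree"
  assumes "polytope P"
    and "P \<subseteq> {x. \<forall>i. 0 \<le> x $ i \<and> x $ i \<le> 1}"
    and "strong_bernoulli_factory t P"
    and "converges_exponentially t P"
  shows "differentiable_factory t P"
proof -
  obtain c where "c < 1" and "\<forall>d>0. \<forall>x\<in>P. 1 - stop_prob t x d \<le> c ^ d"
    using assms(4) by (auto simp: converges_exponentially_def)
  then interpret exp_converging_factory t "vertices P" P c
    using assms(1-3)
    by unfold_locales (auto simp: strong_bernoulli_factory_def unit_cube_def polytope_imp_convex)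
  show ?thesis
    unfolding differentiable_factory_def
  proof (intro ballI impI)
    fix v u x assume u: "u \<in> H0 P" and x: "x \<in> P"
    obtain L where L: "(\<lambda>T. P_vT_deriv t v T x u) \<longlonglongrightarrow> L"
      using convergent_P_vT_deriv[OF x u, of v] by (auto simp: convergent_def)
    have "deriv (\<lambda>s. P_vT t v T (x + s *\<^sub>R u)) 0 = P_vT_deriv t v T x u" for T
      using DERIV_imp_deriv[OF P_vT_has_derivative[of t v T x u 0]] by simp
    then show "\<exists>L. (\<lambda>T. deriv (\<lambda>s. P_vT t v T (x + s *\<^sub>R u)) 0) \<longlonglongrightarrow> L \<and>
        ((\<lambda>s. (P_v t v (x + s *\<^sub>R u) - P_v t v x) / s) \<longlongrightarrow> L) (at 0 within {s. x + s *\<^sub>R u \<in> P})"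
      using L P_v_difference_quotient_tendsto[OF x L] by auto
  qed
qed

end
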